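(* Let $(X,d)$ be a non-empty complete metric space and let $\alpha_{1},\alpha_{2}:X\to X$ be injective contractions with ratios $c_{1},c_{2}\in\,]0,1[$, i.e. $d(\alpha_{i}(x),\alpha_{i}(y))\leq c_{i}\,d(x,y)$ for all $x,y\in X$. Suppose that $\alpha_{1}$ and $\alpha_{2}$ have distinct fixed points and that $c_{1}+c_{2}\leq 1$. Then the semigroup generated by $\alpha_{1}$ and $\alpha_{2}$ under composition is free of rank $2$.
   Context: By Banach's fixed point theorem each contraction has a unique fixed point. A semigroup generated by two elements is free of rank $2$ if distinct finite nonempty words in the two generators give distinct elements. *)

theory Defs
  imports "HOL-Analysis.Analysis"
begin

text \<open>Evaluation of a finite word over the two generators: the letter True stands
for f, False for g; the word [b1,...,bn] denotes the composition
(gen b1) o ... o (gen bn).\<close>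
definition word_eval :: "('a \<Rightarrow> 'a) \<Rightarrow> ('a \<Rightarrow> 'a) \<Rightarrow> bool list \<Rightarrow> ('a \<Rightarrow> 'a)" where
  "word_eval f g w = foldr (\<lambda>b h. (if b then f else g) \<circ> h) w id"

definition free_semigroup2 :: "('a \<Rightarrow> 'a) \<Rightarrow> ('a \<Rightarrow> 'a) \<Rightarrow> bool" where
  "free_semigroup2 f g \<longleftrightarrow>
     (\<forall>w v. w \<noteq> [] \<longrightarrow> v \<noteq> [] \<longrightarrow> w \<noteq> v \<longrightarrow> word_eval f g w \<noteq> word_eval f g v)"

end

theory Submission
  imports Defs
begin

text \<open>Write \<open>\<delta>\<^sub>1 = d(\<alpha>\<^sub>1 p\<^sub>2, p\<^sub>2)\<close> and \<open>\<delta>\<^sub>2 = d(\<alpha>\<^sub>2 p\<^sub>1, p\<^sub>1)\<close>, both positive since the fixed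
  points are distinct, and measure a map \<open>f\<close> by the potential
  \<open>\<Phi>(f) = c\<^sub>2 d(f p\<^sub>2, p\<^sub>2)/\<delta>\<^sub>1 + c\<^sub>1 d(f p\<^sub>1, p\<^sub>1)/\<delta>\<^sub>2\<close>.
  The triangle inequality gives \<open>\<Phi>(\<alpha>\<^sub>1 \<circ> f) \<le> c\<^sub>2 + c\<^sub>1 \<Phi>(f)\<close> and \<open>\<Phi>(\<alpha>\<^sub>2 \<circ> f) \<le> c\<^sub>1 + c\<^sub>2 \<Phi>(f)\<close>,
  so because \<open>c\<^sub>1 + c\<^sub>2 \<le> 1\<close> every element of the semigroup (and the identity) has potential
  below 1. On the other hand, if \<open>\<alpha>\<^sub>1 \<circ> f = \<alpha>\<^sub>2 \<circ> g\<close>, then evaluating at \<open>p\<^sub>2\<close> and at \<open>p\<^sub>1\<close>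
  yields \<open>c\<^sub>1 + c\<^sub>2 \<le> c\<^sub>1 \<Phi>(f) + c\<^sub>2 \<Phi>(g)\<close>. Hence no word starting with \<open>\<alpha>\<^sub>1\<close> equals one starting
  with \<open>\<alpha>\<^sub>2\<close>, and freeness follows by cancelling common prefixes with the injectivity
  of the generators.\<close>

lemma word_eval_Nil [simp]: "word_eval f g [] = id"
  by (simp add: word_eval_def)

lemma word_eval_Cons: "word_eval f g (b # w) = (if b then f else g) \<circ> word_eval f g w"
  by (simp add: word_eval_def)

lemma word_eval_Cons_True [simp]: "word_eval f g (True # w) = f \<circ> word_eval f g w"
  and word_eval_Cons_False [simp]: "word_eval f g (False # w) = g \<circ> word_eval f g w"
  by (simp_all add: word_eval_Cons)

lemma word_eval_append: "word_eval f g (u @ v) = word_eval f g u \<circ> word_eval f g v"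
  by (induction u) (simp_all add: word_eval_Cons comp_assoc)

lemma word_eval_neq_id:
  assumes no_overlap: "\<And>u v. f \<circ> word_eval f g u \<noteq> g \<circ> word_eval f g v"
    and "w \<noteq> []"
  shows "word_eval f g w \<noteq> id"
proof
  assume w_id: "word_eval f g w = id"
  obtain b r where w: "w = b # r"
    using \<open>w \<noteq> []\<close> by (cases w) auto
  \<comment> \<open>appending the other generator to \<open>w\<close> produces an overlap\<close>
  have "(if b then f else g) \<circ> word_eval f g (r @ [\<not> b]) = word_eval f g w \<circ> (if \<not> b then f else g)"
    by (simp add: w word_eval_append word_eval_Cons comp_assoc)
  also have "\<dots> = (if \<not> b then f else g) \<circ> word_eval f g []"
    using w_id by simp
  finally have "(if b then f else g) \<circ> word_eval f g (r @ [\<not> b]) = (if \<not> b then f else g) \<circ> word_eval f g []" .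
  then show False
    using no_overlap[of "r @ [False]" "[]"] no_overlap[of "[]" "r @ [True]"] by (cases b) auto
qed

lemma inj_word_eval:
  assumes "inj f" "inj g"
    and no_overlap: "\<And>u v. f \<circ> word_eval f g u \<noteq> g \<circ> word_eval f g v"
  shows "inj (word_eval f g)"
proof (rule injI)
  fix w v :: "bool list"
  assume "word_eval f g w = word_eval f g v"
  then show "w = v"
  proof (induction w arbitrary: v)
    case Nil
    then show ?case
      using word_eval_neq_id[OF no_overlap, of v] by (metis word_eval_Nil)
  next
    case (Cons b w)
    have "v \<noteq> []"
      using Cons.prems word_eval_neq_id[OF no_overlap, of "b # w"] by (metis word_eval_Nil list.distinct(1))
    then obtain b' v' where v: "v = b' # v'"
      by (cases v) auto
    have "b = b'"
      using Cons.prems no_overlap[of w v'] no_overlap[of v' w]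
      by (cases b; cases b') (simp_all add: v del: comp_apply)
    with Cons.prems have "(if b then f else g) \<circ> word_eval f g w = (if b then f else g) \<circ> word_eval f g v'"
      by (simp add: v word_eval_Cons del: comp_apply)
    moreover have "inj (if b then f else g)"
      using assms by simp
    ultimately have "word_eval f g w = word_eval f g v'"
      by (simp add: fun_eq_iff inj_eq)
    then show ?case
      using Cons.IH \<open>b = b'\<close> v by simp
  qed
qed

lemma free_semigroup2I:
  assumes "inj f" "inj g" "\<And>u v. f \<circ> word_eval f g u \<noteq> g \<circ> word_eval f g v"
  shows "free_semigroup2 f g"
  using inj_word_eval[OF assms] by (auto simp: free_semigroup2_def inj_def)

locale contraction_pair =
  fixes \<alpha>1 \<alpha>2 :: "'a::metric_space \<Rightarrow> 'a" and c1 c2 :: real and p1 p2 :: 'a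
  assumes c1_pos: "0 < c1" and c2_pos: "0 < c2" and ratio_sum: "c1 + c2 \<le> 1"
    and contraction1: "\<And>x y. dist (\<alpha>1 x) (\<alpha>1 y) \<le> c1 * dist x y"
    and contraction2: "\<And>x y. dist (\<alpha>2 x) (\<alpha>2 y) \<le> c2 * dist x y"
    and fixed1: "\<alpha>1 p1 = p1" and fixed2: "\<alpha>2 p2 = p2" and fixed_points_distinct: "p1 \<noteq> p2"
begin

lemma dist_\<alpha>1_p2_pos: "0 < dist (\<alpha>1 p2) p2"
proof (rule ccontr)
  assume "\<not> 0 < dist (\<alpha>1 p2) p2"
  then have "dist p1 p2 \<le> c1 * dist p1 p2"
    using contraction1[of p1 p2] fixed1 by simp
  then show False
    using c1_pos c2_pos ratio_sum fixed_points_distinct by simp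
qed

lemma dist_\<alpha>2_p1_pos: "0 < dist (\<alpha>2 p1) p1"
proof (rule ccontr)
  assume "\<not> 0 < dist (\<alpha>2 p1) p1"
  then have "dist p1 p2 \<le> c2 * dist p1 p2"
    using contraction2[of p1 p2] fixed2 by simp
  then show False
    using c1_pos c2_pos ratio_sum fixed_points_distinct by simp
qed

definition potential :: "('a \<Rightarrow> 'a) \<Rightarrow> real" where
  "potential f = c2 * dist (f p2) p2 / dist (\<alpha>1 p2) p2 + c1 * dist (f p1) p1 / dist (\<alpha>2 p1) p1"

lemma potential_\<alpha>1_comp: "potential (\<alpha>1 \<circ> f) \<le> c2 + c1 * potential f"
proof -
  have "dist (\<alpha>1 (f p2)) p2 \<le> dist (\<alpha>1 (f p2)) (\<alpha>1 p2) + dist (\<alpha>1 p2) p2"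
    by (rule dist_triangle)
  also have "\<dots> \<le> c1 * dist (f p2) p2 + dist (\<alpha>1 p2) p2"
    using contraction1 by simp
  finally have "c2 * dist (\<alpha>1 (f p2)) p2 / dist (\<alpha>1 p2) p2
      \<le> c2 * (c1 * dist (f p2) p2 + dist (\<alpha>1 p2) p2) / dist (\<alpha>1 p2) p2"
    using c2_pos by (simp add: divide_right_mono)
  also have "\<dots> = c2 + c1 * (c2 * dist (f p2) p2 / dist (\<alpha>1 p2) p2)"
    using dist_\<alpha>1_p2_pos by (simp add: field_simps)
  finally have p2_term: "c2 * dist (\<alpha>1 (f p2)) p2 / dist (\<alpha>1 p2) p2
      \<le> c2 + c1 * (c2 * dist (f p2) p2 / dist (\<alpha>1 p2) p2)" .
  have "c1 * dist (\<alpha>1 (f p1)) p1 / dist (\<alpha>2 p1) p1 \<le> c1 * (c1 * dist (f p1) p1) / dist (\<alpha>2 p1) p1"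
    using contraction1[of "f p1" p1] fixed1 c1_pos by (simp add: divide_right_mono)
  with p2_term show ?thesis
    by (simp add: potential_def distrib_left)
qed

lemma potential_\<alpha>2_comp: "potential (\<alpha>2 \<circ> f) \<le> c1 + c2 * potential f"
proof -
  have "dist (\<alpha>2 (f p1)) p1 \<le> dist (\<alpha>2 (f p1)) (\<alpha>2 p1) + dist (\<alpha>2 p1) p1"
    by (rule dist_triangle)
  also have "\<dots> \<le> c2 * dist (f p1) p1 + dist (\<alpha>2 p1) p1"
    using contraction2 by simp
  finally have "c1 * dist (\<alpha>2 (f p1)) p1 / dist (\<alpha>2 p1) p1
      \<le> c1 * (c2 * dist (f p1) p1 + dist (\<alpha>2 p1) p1) / dist (\<alpha>2 p1) p1"
    using c1_pos by (simp add: divide_right_mono)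
  also have "\<dots> = c1 + c2 * (c1 * dist (f p1) p1 / dist (\<alpha>2 p1) p1)"
    using dist_\<alpha>2_p1_pos by (simp add: field_simps)
  finally have p1_term: "c1 * dist (\<alpha>2 (f p1)) p1 / dist (\<alpha>2 p1) p1
      \<le> c1 + c2 * (c1 * dist (f p1) p1 / dist (\<alpha>2 p1) p1)" .
  have "c2 * dist (\<alpha>2 (f p2)) p2 / dist (\<alpha>1 p2) p2 \<le> c2 * (c2 * dist (f p2) p2) / dist (\<alpha>1 p2) p2"
    using contraction2[of "f p2" p2] fixed2 c2_pos by (simp add: divide_right_mono)
  with p1_term show ?thesis
    by (simp add: potential_def distrib_left)
qed

lemma potential_word_eval_less_1: "potential (word_eval \<alpha>1 \<alpha>2 w) < 1"
proof (induction w)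
  case Nil
  then show ?case by (simp add: potential_def)
next
  case (Cons b w)
  have "c1 * potential (word_eval \<alpha>1 \<alpha>2 w) < c1" "c2 * potential (word_eval \<alpha>1 \<alpha>2 w) < c2"
    using Cons.IH c1_pos c2_pos by simp_all
  then show ?case
    using potential_\<alpha>1_comp[of "word_eval \<alpha>1 \<alpha>2 w"] potential_\<alpha>2_comp[of "word_eval \<alpha>1 \<alpha>2 w"] ratio_sum
    by (cases b) (simp_all del: comp_apply)
qed

lemma ratio_sum_le_potential_if_comp_eq:
  assumes eq: "\<alpha>1 \<circ> f = \<alpha>2 \<circ> g"
  shows "c1 + c2 \<le> c1 * potential f + c2 * potential g"
proof -
  have eq_at: "\<alpha>1 (f x) = \<alpha>2 (g x)" for x
    using eq by (metis comp_apply)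
  have "dist (\<alpha>1 p2) p2 \<le> dist (\<alpha>1 p2) (\<alpha>1 (f p2)) + dist (\<alpha>2 (g p2)) (\<alpha>2 p2)"
    using dist_triangle[of "\<alpha>1 p2" p2 "\<alpha>1 (f p2)"] eq_at fixed2 by simp
  also have "\<dots> \<le> c1 * dist (f p2) p2 + c2 * dist (g p2) p2"
    using contraction1 contraction2 by (intro add_mono) (auto simp: dist_commute)
  finally have c2_le: "c2 \<le> c2 * (c1 * dist (f p2) p2 + c2 * dist (g p2) p2) / dist (\<alpha>1 p2) p2"
    using dist_\<alpha>1_p2_pos c2_pos by (simp add: le_divide_eq mult_left_mono)
  have "dist (\<alpha>2 p1) p1 \<le> dist (\<alpha>2 p1) (\<alpha>2 (g p1)) + dist (\<alpha>1 (f p1)) (\<alpha>1 p1)"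
    using dist_triangle[of "\<alpha>2 p1" p1 "\<alpha>2 (g p1)"] eq_at fixed1 by simp
  also have "\<dots> \<le> c2 * dist (g p1) p1 + c1 * dist (f p1) p1"
    using contraction1 contraction2 by (intro add_mono) (auto simp: dist_commute)
  finally have c1_le: "c1 \<le> c1 * (c2 * dist (g p1) p1 + c1 * dist (f p1) p1) / dist (\<alpha>2 p1) p1"
    using dist_\<alpha>2_p1_pos c1_pos by (simp add: le_divide_eq mult_left_mono)
  from c1_le c2_le show ?thesis
    by (simp add: potential_def add_divide_distrib distrib_left mult.left_commute)
qed

lemma comp_word_eval_neq: "\<alpha>1 \<circ> word_eval \<alpha>1 \<alpha>2 u \<noteq> \<alpha>2 \<circ> word_eval \<alpha>1 \<alpha>2 v"
proof
  assume "\<alpha>1 \<circ> word_eval \<alpha>1 \<alpha>2 u = \<alpha>2 \<circ> word_eval \<alpha>1 \<alpha>2 v"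
  then have "c1 + c2 \<le> c1 * potential (word_eval \<alpha>1 \<alpha>2 u) + c2 * potential (word_eval \<alpha>1 \<alpha>2 v)"
    by (rule ratio_sum_le_potential_if_comp_eq)
  moreover have "c1 * potential (word_eval \<alpha>1 \<alpha>2 u) < c1" "c2 * potential (word_eval \<alpha>1 \<alpha>2 v) < c2"
    using potential_word_eval_less_1 c1_pos c2_pos by simp_all
  ultimately show False
    by simp
qed

end

theorem proposition2p1:
  fixes \<alpha>1 \<alpha>2 :: "'a::complete_space \<Rightarrow> 'a" and c1 c2 :: real and p1 p2 :: 'a
  assumes "0 < c1" "c1 < 1" "0 < c2" "c2 < 1"
    and "inj \<alpha>1" "inj \<alpha>2"
    and "\<And>x y. dist (\<alpha>1 x) (\<alpha>1 y) \<le> c1 * dist x y"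
    and "\<And>x y. dist (\<alpha>2 x) (\<alpha>2 y) \<le> c2 * dist x y"
    and "\<alpha>1 p1 = p1" "\<alpha>2 p2 = p2" "p1 \<noteq> p2"
    and "c1 + c2 \<le> 1"
  shows "free_semigroup2 \<alpha>1 \<alpha>2"
proof -
  interpret contraction_pair \<alpha>1 \<alpha>2 c1 c2 p1 p2
    using assms by unfold_locales auto
  show ?thesis
    using assms(5,6) comp_word_eval_neq by (rule free_semigroup2I)
qed

end
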